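(* Assume (F1)–(F3), let $\tau\ge0$ and $c\le0$. Let $w_*\in(0,1)$ be such that $f(w_* )=1$ and $f(w)>1$ for $0\le w<w_*$, and suppose $f'(w)<0$ for $w_*\le w\le w_0$. If $w$ is a solution of problem (P) with these $\tau,c$ such that $w'(x)\le0$ for all $x\in\mathbb R$, then $w'(x)<0$ for all $x\in\mathbb R$.
   Context: $f:\mathbb R\to\mathbb R$ is $C^4$ with bounded derivatives and satisfies: (F1) $f(w)>0$ for $0\le w<1$, $f(1)=0$, $f'(1)>-1$; (F2) $f(0)>1$, $f'(0)>0$, and $f(w)>1$ for $0\le w<w_*$ for some $w_*\in(0,1)$; (F3) the equation $f(w)=1-w$ has exactly one solution $w_0$ in $(0,1)$, and $f'(w_0)<-1$; hence $f(w)>1-w$ for $0\le w<w_0$ and $f(w)<1-w$ for $w_0<w<1$. Problem (P) for given $\tau\ge0$, $c\in\mathbb R$: find $w\in C^2(\mathbb R)$ with $w''(x)+cw'(x)+w(x)\big(1-w(x)-f(w(x+c\tau))\big)=0$ for all $x$, and $w(-\infty)=1$, $w(+\infty)=0$. *)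

theory Defs
  imports "HOL-Analysis.Analysis"
begin

definition C4_bdd :: "(real \<Rightarrow> real) \<Rightarrow> bool" where
  "C4_bdd f \<longleftrightarrow>
     (\<forall>k<4. \<forall>x. (deriv ^^ k) f differentiable at x) \<and>
     continuous_on UNIV ((deriv ^^ 4) f) \<and>
     (\<forall>k\<in>{1..4::nat}. bounded (range ((deriv ^^ k) f)))"

definition C2 :: "(real \<Rightarrow> real) \<Rightarrow> bool" where
  "C2 w \<longleftrightarrow> (\<forall>x. w differentiable at x) \<and> (\<forall>x. deriv w differentiable at x)
              \<and> continuous_on UNIV (deriv (deriv w))"

definition hypF :: "(real \<Rightarrow> real) \<Rightarrow> bool" where
  "hypF f \<longleftrightarrow>
    \<comment> \<open>(F1)\<close>
    (\<forall>w. 0 \<le> w \<and> w < 1 \<longrightarrow> f w > 0) \<and> f 1 = 0 \<and> deriv f 1 > -1 \<and>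
    \<comment> \<open>(F2)\<close>
    f 0 > 1 \<and> deriv f 0 > 0 \<and>
    (\<exists>ws. 0 < ws \<and> ws < 1 \<and> (\<forall>w. 0 \<le> w \<and> w < ws \<longrightarrow> f w > 1)) \<and>
    \<comment> \<open>(F3)\<close>
    (\<exists>!w0. 0 < w0 \<and> w0 < 1 \<and> f w0 = 1 - w0) \<and>
    (\<forall>w0. 0 < w0 \<and> w0 < 1 \<and> f w0 = 1 - w0 \<longrightarrow> deriv f w0 < -1)"

definition solves_P :: "(real \<Rightarrow> real) \<Rightarrow> real \<Rightarrow> real \<Rightarrow> (real \<Rightarrow> real) \<Rightarrow> bool" where
  "solves_P f tau c w \<longleftrightarrow> C2 w \<and>
     (\<forall>x. deriv (deriv w) x + c * deriv w x + w x * (1 - w x - f (w (x + c * tau))) = 0) \<and>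
     (w \<longlongrightarrow> 1) at_bot \<and> (w \<longlongrightarrow> 0) at_top"

end

theory Submission
  imports Defs
begin

text \<open>
  At a critical point \<open>x\<close> of the nonincreasing profile \<open>w\<close>, \<open>w'\<close> attains its maximum \<open>0\<close>, so
  \<open>w''(x) = 0\<close> and the equation forces \<open>w(x) (1 - w(x) - f(w(x + c\<tau>))) = 0\<close>. The values
  \<open>w(x) = 0\<close> and \<open>w(x) = 1\<close> are excluded by uniqueness for a linear second-order differential
  inequality (an energy estimate): \<open>w\<close> would be constant on a half line. Hence
  \<open>f(w(x + c\<tau>)) = 1 - w(x)\<close>; if \<open>c\<tau> = 0\<close> this makes \<open>w(x) = w\<^sub>0\<close> and the same uniqueness
  argument applies, so \<open>c\<tau> < 0\<close>, and (F2), (F3) place \<open>w(x + c\<tau>)\<close> in \<open>[w\<^sub>*, w\<^sub>0]\<close>, where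
  \<open>f' < 0\<close>. Differentiating the equation, \<open>w'''(x)\<close> has the sign of \<open>-w'(x + c\<tau>)\<close>, and since
  \<open>w' \<le> 0\<close> cannot become positive, \<open>w'(x + c\<tau>) = 0\<close>. Iterating gives \<open>w(x + n c\<tau>) \<le> w\<^sub>0\<close>
  for all \<open>n \<ge> 1\<close>, contradicting \<open>w(-\<infinity>) = 1\<close>.
\<close>

lemma energy_derivative_bound:
  fixes u v b c L :: real
  assumes "\<bar>b + c * v\<bar> \<le> L * \<bar>u\<bar>"
  shows "2 * u * v + 2 * v * b \<le> (1 + 2 * \<bar>c\<bar> + \<bar>L\<bar>) * (u\<^sup>2 + v\<^sup>2)"
proof -
  have uv: "2 * \<bar>u\<bar> * \<bar>v\<bar> \<le> u\<^sup>2 + v\<^sup>2"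
    using sum_squares_bound[of "\<bar>u\<bar>" "\<bar>v\<bar>"] by (simp add: power2_eq_square)
  have "2 * v * (b + c * v) \<le> 2 * \<bar>v\<bar> * \<bar>b + c * v\<bar>"
    by (metis abs_ge_self abs_mult abs_numeral mult.assoc)
  also have "\<dots> \<le> 2 * \<bar>v\<bar> * (L * \<bar>u\<bar>)"
    using assms by (simp add: mult_left_mono)
  also have "\<dots> \<le> \<bar>L\<bar> * (2 * \<bar>u\<bar> * \<bar>v\<bar>)"
    by (simp add: abs_mult mult_right_mono algebra_simps)
  also have "\<dots> \<le> \<bar>L\<bar> * (u\<^sup>2 + v\<^sup>2)"
    using uv by (simp add: mult_left_mono)
  finally have "2 * v * (b + c * v) \<le> \<bar>L\<bar> * (u\<^sup>2 + v\<^sup>2)" .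
  moreover have "- 2 * c * v\<^sup>2 \<le> 2 * \<bar>c\<bar> * (u\<^sup>2 + v\<^sup>2)"
  proof -
    have "- c * v\<^sup>2 \<le> \<bar>c\<bar> * v\<^sup>2" using mult_right_mono[of "- c" "\<bar>c\<bar>" "v\<^sup>2"] by simp
    also have "\<dots> \<le> \<bar>c\<bar> * (u\<^sup>2 + v\<^sup>2)" by (simp add: mult_left_mono)
    finally show ?thesis by simp
  qed
  moreover have "2 * u * v \<le> u\<^sup>2 + v\<^sup>2"
    using sum_squares_bound[of u v] by (simp add: power2_eq_square)
  ultimately show ?thesis
    by (simp add: algebra_simps power2_eq_square)
qed

lemma second_order_vanishing_ge:
  fixes u u' u'' :: "real \<Rightarrow> real"
  assumes u: "\<And>x. (u has_real_derivative u' x) (at x)"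
    and u': "\<And>x. (u' has_real_derivative u'' x) (at x)"
    and bound: "\<And>x. x \<ge> a \<Longrightarrow> \<bar>u'' x + c * u' x\<bar> \<le> L * \<bar>u x\<bar>"
    and "u a = 0" and "u' a = 0" and "a \<le> x"
  shows "u x = 0"
proof -
  define K where "K = 1 + 2 * \<bar>c\<bar> + \<bar>L\<bar>"
  define E where "E y = (u y)\<^sup>2 + (u' y)\<^sup>2" for y
  \<comment> \<open>The energy \<open>E\<close> grows at most like \<open>exp (K y)\<close> and starts at \<open>0\<close>.\<close>
  define \<phi> where "\<phi> y = exp (- K * y) * E y" for y
  have "\<phi> x \<le> \<phi> a"
  proof (rule DERIV_nonpos_imp_nonincreasing[OF \<open>a \<le> x\<close>])
    fix y assume "a \<le> y"
    have "(\<phi> has_real_derivative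
        exp (- K * y) * (2 * u y * u' y + 2 * u' y * u'' y - K * E y)) (at y)"
      unfolding \<phi>_def E_def
      by (rule derivative_eq_intros u u' refl | simp add: algebra_simps)+
    moreover have "2 * u y * u' y + 2 * u' y * u'' y \<le> K * E y"
      unfolding K_def E_def using energy_derivative_bound bound[OF \<open>a \<le> y\<close>] by blast
    ultimately show "\<exists>l. (\<phi> has_real_derivative l) (at y) \<and> l \<le> 0"
      by (auto simp: mult_nonneg_nonpos)
  qed
  also have "\<phi> a = 0"
    unfolding \<phi>_def E_def using \<open>u a = 0\<close> \<open>u' a = 0\<close> by simp
  finally have "(u x)\<^sup>2 + (u' x)\<^sup>2 \<le> 0"
    unfolding \<phi>_def E_def by (simp add: mult_le_0_iff)
  then have "(u x)\<^sup>2 \<le> 0"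
    using zero_le_power2[of "u' x"] by linarith
  then show ?thesis by simp
qed

lemma second_order_vanishing_le:
  fixes u u' u'' :: "real \<Rightarrow> real"
  assumes u: "\<And>x. (u has_real_derivative u' x) (at x)"
    and u': "\<And>x. (u' has_real_derivative u'' x) (at x)"
    and bound: "\<And>x. x \<le> a \<Longrightarrow> \<bar>u'' x + c * u' x\<bar> \<le> L * \<bar>u x\<bar>"
    and "u a = 0" and "u' a = 0" and "x \<le> a"
  shows "u x = 0"
proof -
  have "(\<lambda>t. u (- t)) (- x) = 0"
  proof (rule second_order_vanishing_ge[where u = "\<lambda>t. u (- t)" and x = "- x" and u' = "\<lambda>t. - u' (- t)" and u'' = "\<lambda>t. u'' (- t)"
        and c = "- c" and L = L and a = "- a"])
    fix t
    show "((\<lambda>t. u (- t)) has_real_derivative - u' (- t)) (at t)"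
      using DERIV_chain2[OF u DERIV_minus[OF DERIV_ident]] by simp
    show "((\<lambda>t. - u' (- t)) has_real_derivative u'' (- t)) (at t)"
      using DERIV_minus[OF DERIV_chain2[OF u' DERIV_minus[OF DERIV_ident]]] by simp
  next
    fix t :: real assume "- a \<le> t"
    then show "\<bar>u'' (- t) + - c * - u' (- t)\<bar> \<le> L * \<bar>u (- t)\<bar>"
      using bound[of "- t"] by simp
  qed (use assms(4-6) in auto)
  then show ?thesis by simp
qed

lemma tendsto_at_bot_along_progression:
  fixes g :: "real \<Rightarrow> 'a::topological_space"
  assumes "(g \<longlongrightarrow> l) at_bot" and "d < 0"
  shows "(\<lambda>n. g (x + d * real n)) \<longlonglongrightarrow> l"
proof -
  have "filterlim (\<lambda>n. d * real n) at_bot sequentially"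
    using filterlim_cmult_at_bot_at_top[OF filterlim_real_sequentially, of d at_bot] \<open>d < 0\<close> by simp
  then have "filterlim (\<lambda>n. x + d * real n) at_bot sequentially"
    by (subst filterlim_tendsto_add_at_bot_iff[OF tendsto_const])
  from filterlim_compose[OF assms(1) this] show ?thesis .
qed

lemma hypF_below_diagonal:
  fixes f :: "real \<Rightarrow> real"
  assumes "hypF f" and f: "\<And>x. f differentiable at x"
    and "0 < w0" and "w0 < 1" and "f w0 = 1 - w0" and "w0 < v" and "v < 1"
  shows "f v < 1 - v"
proof (rule ccontr)
  \<comment> \<open>\<open>h < 0\<close> just left of \<open>1\<close> by (F1), so \<open>h v \<ge> 0\<close> would give a second zero of \<open>h\<close> in \<open>(w\<^sub>0, 1)\<close>.\<close>
  define h where "h y = f y - (1 - y)" for y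
  have zero_of_h: "t = w0" if "0 < t" "t < 1" "h t = 0" for t
    using \<open>hypF f\<close> that assms(3-5) unfolding hypF_def h_def by auto
  assume "\<not> f v < 1 - v"
  moreover have "h v \<noteq> 0"
    using zero_of_h[of v] assms(3,6,7) by auto
  ultimately have "0 \<le> h v"
    unfolding h_def by simp
  have "(h has_real_derivative deriv f 1 + 1) (at 1)"
    unfolding h_def using f[of 1]
    by (auto intro!: derivative_eq_intros simp: DERIV_deriv_iff_real_differentiable)
  moreover have "deriv f 1 + 1 > 0" and "h 1 = 0"
    using \<open>hypF f\<close> unfolding hypF_def h_def by auto
  ultimately obtain d where "d > 0" and d: "\<And>k. 0 < k \<Longrightarrow> k < d \<Longrightarrow> h (1 - k) < 0"
    using DERIV_pos_inc_left by fastforce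
  define k where "k = min (d / 2) ((1 - v) / 2)"
  have "0 < k" "k < d" "v \<le> 1 - k"
    using \<open>d > 0\<close> \<open>v < 1\<close> unfolding k_def by (auto simp: min_def field_simps)
  moreover have "continuous_on {v..1 - k} h"
    unfolding h_def using f
    by (intro continuous_intros continuous_at_imp_continuous_on) (auto intro: differentiable_imp_continuous_within)
  ultimately have "\<exists>t\<ge>v. t \<le> 1 - k \<and> h t = 0"
    using d \<open>0 \<le> h v\<close> by (intro IVT2') (auto intro: less_imp_le)
  then obtain t where "v \<le> t" "t \<le> 1 - k" "h t = 0"
    by blast
  then show False
    using zero_of_h[of t] assms(3,6) \<open>0 < k\<close> by auto
qed

locale monotone_front =
  fixes f w :: "real \<Rightarrow> real" and tau c :: real
  assumes f_differentiable: "\<And>x. f differentiable at x"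
    and f'_bounded: "bounded (range (deriv f))"
    and delay_nonpos: "c * tau \<le> 0"
    and solves: "solves_P f tau c w"
    and w'_nonpos: "\<And>x. deriv w x \<le> 0"
begin

lemma f_has_deriv: "(f has_real_derivative deriv f x) (at x)"
  using f_differentiable by (simp add: DERIV_deriv_iff_real_differentiable)

lemma f_lipschitz:
  obtains B where "0 \<le> B" and "\<And>a b. \<bar>f a - f b\<bar> \<le> B * \<bar>a - b\<bar>"
proof -
  obtain B where B: "\<And>x. \<bar>deriv f x\<bar> \<le> B"
    using f'_bounded by (auto simp: bounded_iff)
  show thesis
  proof
    show "0 \<le> B" using B[of 0] by linarith
    show "\<bar>f a - f b\<bar> \<le> B * \<bar>a - b\<bar>" for a b
      using field_differentiable_bound[of UNIV f "deriv f" B a b] f_has_deriv B by auto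
  qed
qed

lemma f_bounded_on_unit_interval:
  obtains M where "\<And>v. 0 \<le> v \<Longrightarrow> v \<le> 1 \<Longrightarrow> \<bar>f v\<bar> \<le> M"
proof -
  have "continuous_on {0..1} f"
    using f_differentiable
    by (intro continuous_at_imp_continuous_on) (auto intro: differentiable_imp_continuous_within)
  then have "bounded (f ` {0..1})"
    by (intro compact_imp_bounded compact_continuous_image) auto
  then show thesis
    using that by (force simp: bounded_iff)
qed

lemma w_has_deriv: "(w has_real_derivative deriv w x) (at x)"
  and w'_has_deriv: "(deriv w has_real_derivative deriv (deriv w) x) (at x)"
  using solves unfolding solves_P_def C2_def by (simp_all add: DERIV_deriv_iff_real_differentiable)

lemma wave_equation:
  "deriv (deriv w) x + c * deriv w x + w x * (1 - w x - f (w (x + c * tau))) = 0"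
  using solves unfolding solves_P_def by blast

lemma w_at_bot: "(w \<longlongrightarrow> 1) at_bot"
  and w_at_top: "(w \<longlongrightarrow> 0) at_top"
  using solves unfolding solves_P_def by auto

lemma w_antimono: "x \<le> y \<Longrightarrow> w y \<le> w x"
  using DERIV_nonpos_imp_nonincreasing[of x y w] w_has_deriv w'_nonpos by blast

lemma w_nonneg: "0 \<le> w x"
proof (rule tendsto_upperbound[OF w_at_top _ trivial_limit_at_top_linorder])
  show "eventually (\<lambda>y. w y \<le> w x) at_top"
    unfolding eventually_at_top_linorder using w_antimono by blast
qed

lemma w_le_1: "w x \<le> 1"
proof (rule tendsto_lowerbound[OF w_at_bot _ trivial_limit_at_bot_linorder])
  show "eventually (\<lambda>y. w x \<le> w y) at_bot"
    unfolding eventually_at_bot_linorder using w_antimono by blast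
qed

lemma w_const_on_right:
  assumes "\<And>y. x \<le> y \<Longrightarrow> w y = e"
  shows "e = 0"
proof -
  have "eventually (\<lambda>y. w y = e) at_top"
    unfolding eventually_at_top_linorder using assms by blast
  from tendsto_unique[OF trivial_limit_at_top_linorder tendsto_eventually[OF this] w_at_top]
  show ?thesis .
qed

lemma w_const_on_left:
  assumes "\<And>y. y \<le> x \<Longrightarrow> w y = e"
  shows "e = 1"
proof -
  have "eventually (\<lambda>y. w y = e) at_bot"
    unfolding eventually_at_bot_linorder using assms by blast
  from tendsto_unique[OF trivial_limit_at_bot_linorder tendsto_eventually[OF this] w_at_bot]
  show ?thesis .
qed

lemma critical_point_deriv2:
  assumes "deriv w x = 0"
  shows "deriv (deriv w) x = 0"
  by (rule DERIV_local_max[OF w'_has_deriv zero_less_one]) (use assms w'_nonpos in auto)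

lemma critical_point_balance:
  assumes "deriv w x = 0"
  shows "w x * (1 - w x - f (w (x + c * tau))) = 0"
  using wave_equation[of x] critical_point_deriv2[OF assms] assms by simp

lemma critical_value_pos:
  assumes "deriv w x = 0"
  shows "0 < w x"
proof (rule ccontr)
  assume "\<not> 0 < w x"
  then have "w x = 0" using w_nonneg[of x] by simp
  obtain M where M: "\<And>v. 0 \<le> v \<Longrightarrow> v \<le> 1 \<Longrightarrow> \<bar>f v\<bar> \<le> M"
    using f_bounded_on_unit_interval by blast
  have "w y = 0" if "y \<le> x" for y
  proof (rule second_order_vanishing_le[OF w_has_deriv w'_has_deriv, where a = x and c = c and L = "2 + M"])
    fix y
    have "\<bar>1 - w y - f (w (y + c * tau))\<bar> \<le> 2 + M"
      using M[OF w_nonneg w_le_1, of "y + c * tau"] w_nonneg[of y] w_le_1[of y] by linarith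
    then have "\<bar>w y\<bar> * \<bar>1 - w y - f (w (y + c * tau))\<bar> \<le> \<bar>w y\<bar> * (2 + M)"
      by (simp add: mult_left_mono)
    moreover have "deriv (deriv w) y + c * deriv w y = - (w y * (1 - w y - f (w (y + c * tau))))"
      using wave_equation[of y] by linarith
    ultimately show "\<bar>deriv (deriv w) y + c * deriv w y\<bar> \<le> (2 + M) * \<bar>w y\<bar>"
      by (simp add: abs_mult mult.commute)
  qed (use \<open>w x = 0\<close> assms that in auto)
  then have "(0::real) = 1" by (rule w_const_on_left)
  then show False by simp
qed

lemma critical_value_less_1:
  assumes "f 1 = 0" and "deriv w x = 0"
  shows "w x < 1"
proof (rule ccontr)
  assume "\<not> w x < 1"
  then have "w x = 1" using w_le_1[of x] by simp
  obtain B where "0 \<le> B" and B: "\<And>a b. \<bar>f a - f b\<bar> \<le> B * \<bar>a - b\<bar>"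
    using f_lipschitz by blast
  have "1 - w y = 0" if "x \<le> y" for y
  proof (rule second_order_vanishing_ge[where u = "\<lambda>y. 1 - w y" and x = y and u' = "\<lambda>y. - deriv w y" and u'' = "\<lambda>y. - deriv (deriv w) y"
        and a = x and c = c and L = "1 + B"])
    fix y
    show "((\<lambda>y. 1 - w y) has_real_derivative - deriv w y) (at y)"
      using w_has_deriv by (auto intro!: derivative_eq_intros)
    show "((\<lambda>y. - deriv w y) has_real_derivative - deriv (deriv w) y) (at y)"
      using w'_has_deriv by (auto intro!: derivative_eq_intros)
    \<comment> \<open>\<open>c \<tau> \<le> 0\<close> puts the delayed value \<open>w (y + c \<tau>)\<close> between \<open>w y\<close> and \<open>1\<close>.\<close>
    have "w y \<le> w (y + c * tau)"
      using w_antimono delay_nonpos by simp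
    then have "\<bar>f (w (y + c * tau))\<bar> \<le> B * (1 - w y)"
      using B[of "w (y + c * tau)" 1] \<open>f 1 = 0\<close> w_le_1[of "y + c * tau"]
        mult_left_mono[of "1 - w (y + c * tau)" "1 - w y" B] \<open>0 \<le> B\<close> by simp
    then have "\<bar>1 - w y - f (w (y + c * tau))\<bar> \<le> (1 + B) * \<bar>1 - w y\<bar>"
      using w_le_1[of y] by (simp add: algebra_simps)
    then have "\<bar>w y\<bar> * \<bar>1 - w y - f (w (y + c * tau))\<bar> \<le> 1 * ((1 + B) * \<bar>1 - w y\<bar>)"
      using w_nonneg[of y] w_le_1[of y] by (intro mult_mono) auto
    moreover have "- deriv (deriv w) y + c * - deriv w y = w y * (1 - w y - f (w (y + c * tau)))"
      using wave_equation[of y] by linarith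
    ultimately show "\<bar>- deriv (deriv w) y + c * - deriv w y\<bar> \<le> (1 + B) * \<bar>1 - w y\<bar>"
      by (simp add: abs_mult)
  qed (use \<open>w x = 1\<close> assms that in auto)
  then have "(1::real) = 0" by (intro w_const_on_right[of x]) auto
  then show False by simp
qed

lemma critical_value_not_equilibrium:
  assumes "c * tau = 0" and "deriv w x = 0"
    and "0 < e" and "e \<le> 1" and "f e = 1 - e"
  shows "w x \<noteq> e"
proof
  assume "w x = e"
  obtain B where "0 \<le> B" and B: "\<And>a b. \<bar>f a - f b\<bar> \<le> B * \<bar>a - b\<bar>"
    using f_lipschitz by blast
  obtain M where M: "\<And>v. 0 \<le> v \<Longrightarrow> v \<le> 1 \<Longrightarrow> \<bar>f v\<bar> \<le> M"
    using f_bounded_on_unit_interval by blast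
  have "w y - e = 0" if "x \<le> y" for y
  proof (rule second_order_vanishing_ge[where u = "\<lambda>y. w y - e" and x = y
        and u' = "deriv w" and u'' = "deriv (deriv w)" and a = x and c = c and L = "1 + M + B"])
    fix y
    show "((\<lambda>y. w y - e) has_real_derivative deriv w y) (at y)"
      using w_has_deriv by (auto intro!: derivative_eq_intros)
    show "(deriv w has_real_derivative deriv (deriv w) y) (at y)"
      by (rule w'_has_deriv)
    define a where "a = w y"
    have "0 \<le> a" "a \<le> 1" unfolding a_def by (rule w_nonneg, rule w_le_1)
    \<comment> \<open>Since \<open>e (1 - e - f e) = 0\<close>, the nonlinearity is Lipschitz around \<open>e\<close>.\<close>
    have split: "a * (1 - a - f a) = (a - e) * (1 - a - e) - (a - e) * f a - e * (f a - f e)"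
      by (simp only: \<open>f e = 1 - e\<close>) (simp add: algebra_simps)
    have "\<bar>(a - e) * (1 - a - e)\<bar> \<le> \<bar>a - e\<bar> * 1"
      unfolding abs_mult using \<open>0 \<le> a\<close> \<open>a \<le> 1\<close> \<open>0 < e\<close> \<open>e \<le> 1\<close> by (intro mult_left_mono) auto
    moreover have "\<bar>(a - e) * f a\<bar> \<le> \<bar>a - e\<bar> * M"
      unfolding abs_mult using M \<open>0 \<le> a\<close> \<open>a \<le> 1\<close> by (intro mult_left_mono) auto
    moreover have "\<bar>e * (f a - f e)\<bar> \<le> 1 * (B * \<bar>a - e\<bar>)"
      unfolding abs_mult using B \<open>0 < e\<close> \<open>e \<le> 1\<close> \<open>0 \<le> B\<close> by (intro mult_mono) auto
    ultimately have "\<bar>a * (1 - a - f a)\<bar> \<le> (1 + M + B) * \<bar>a - e\<bar>"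
      unfolding split by (simp add: algebra_simps) linarith
    moreover have "deriv (deriv w) y + c * deriv w y = - (a * (1 - a - f a))"
      using wave_equation[of y] \<open>c * tau = 0\<close> unfolding a_def by simp
    ultimately show "\<bar>deriv (deriv w) y + c * deriv w y\<bar> \<le> (1 + M + B) * \<bar>w y - e\<bar>"
      unfolding a_def by simp
  qed (use \<open>w x = e\<close> assms(2) that in auto)
  then have "e = 0" by (intro w_const_on_right[of x]) auto
  then show False using \<open>0 < e\<close> by simp
qed

lemma critical_point_delayed:
  assumes "deriv w x = 0" and "deriv f (w (x + c * tau)) < 0"
  shows "deriv w (x + c * tau) = 0"
proof (rule ccontr)
  assume "deriv w (x + c * tau) \<noteq> 0"
  then have "deriv w (x + c * tau) < 0" using w'_nonpos[of "x + c * tau"] by simp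
  have w'': "deriv (deriv w) = (\<lambda>y. - c * deriv w y - w y * (1 - w y - f (w (y + c * tau))))"
    using wave_equation by (auto simp: fun_eq_iff algebra_simps)
  have "((\<lambda>y. y + c * tau) has_real_derivative 1) (at x)"
    by (auto intro!: derivative_eq_intros)
  from DERIV_chain2[OF w_has_deriv this]
  have "((\<lambda>y. w (y + c * tau)) has_real_derivative deriv w (x + c * tau)) (at x)"
    by simp
  from DERIV_chain2[OF f_has_deriv this]
  have "((\<lambda>y. f (w (y + c * tau))) has_real_derivative
      deriv f (w (x + c * tau)) * deriv w (x + c * tau)) (at x)" .
  \<comment> \<open>At a critical point only the delayed term contributes to the third derivative.\<close>
  from DERIV_diff[OF DERIV_cmult[OF w'_has_deriv, of "- c"]
      DERIV_mult[OF w_has_deriv DERIV_diff[OF DERIV_diff[OF DERIV_const[of 1] w_has_deriv] this]]]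
  have "(deriv (deriv w) has_real_derivative
      w x * deriv f (w (x + c * tau)) * deriv w (x + c * tau)) (at x)"
    unfolding w'' using critical_point_balance[OF assms(1)] by (simp add: assms(1) mult_ac)
  moreover have "w x * deriv f (w (x + c * tau)) * deriv w (x + c * tau) > 0"
    using critical_value_pos[OF assms(1)] assms(2) \<open>deriv w (x + c * tau) < 0\<close>
    by (simp add: mult_pos_neg mult_neg_neg)
  ultimately obtain d where "d > 0"
    and d: "\<forall>h>0. h < d \<longrightarrow> deriv (deriv w) x < deriv (deriv w) (x + h)"
    using DERIV_pos_inc_right by blast
  obtain \<xi> where "x < \<xi>" "\<xi> < x + d / 2"
    and mvt: "deriv w (x + d / 2) - deriv w x = (x + d / 2 - x) * deriv (deriv w) \<xi>"
    using MVT2[of x "x + d / 2" "deriv w" "deriv (deriv w)"] w'_has_deriv \<open>d > 0\<close> by auto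
  have "deriv (deriv w) \<xi> > 0"
    using d[rule_format, of "\<xi> - x"] critical_point_deriv2[OF assms(1)] \<open>x < \<xi>\<close> \<open>\<xi> < x + d / 2\<close>
    by simp
  then have "deriv w (x + d / 2) > 0"
    using mvt mult_pos_pos[OF \<open>d > 0\<close>] assms(1) by fastforce
  then show False using w'_nonpos[of "x + d / 2"] by simp
qed

end

lemma (in monotone_front) critical_point_propagates:
  assumes "hypF f" and "0 < w0" and "w0 < 1" and "f w0 = 1 - w0"
    and above_one: "\<forall>v. 0 \<le> v \<and> v < ws \<longrightarrow> f v > 1"
    and decreasing: "\<forall>v. ws \<le> v \<and> v \<le> w0 \<longrightarrow> deriv f v < 0"
    and "deriv w x = 0"
  shows "c * tau < 0 \<and> deriv w (x + c * tau) = 0 \<and> w (x + c * tau) \<le> w0"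
proof -
  have "f 1 = 0" using \<open>hypF f\<close> unfolding hypF_def by blast
  have "0 < w x" and "w x < 1"
    using critical_value_pos critical_value_less_1 \<open>f 1 = 0\<close> \<open>deriv w x = 0\<close> by auto
  define z where "z = w (x + c * tau)"
  have balance: "f z = 1 - w x"
    using critical_point_balance[OF \<open>deriv w x = 0\<close>] \<open>0 < w x\<close> unfolding z_def by simp
  have "c * tau \<noteq> 0"
  proof
    assume "c * tau = 0"
    then have "f (w x) = 1 - w x" using balance unfolding z_def \<open>c * tau = 0\<close> by simp
    then have "w x = w0"
      using \<open>hypF f\<close> \<open>0 < w x\<close> \<open>w x < 1\<close> assms(2-4) unfolding hypF_def by blast
    then show False
      using critical_value_not_equilibrium[OF \<open>c * tau = 0\<close> \<open>deriv w x = 0\<close> \<open>0 < w0\<close>] assms(3,4) by simp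
  qed
  with delay_nonpos have "c * tau < 0" by linarith
  have "w x \<le> z" unfolding z_def using w_antimono delay_nonpos by simp
  have "ws \<le> z"
  proof (rule ccontr)
    assume "\<not> ws \<le> z"
    then have "f z > 1" using above_one w_nonneg unfolding z_def by simp
    then show False using balance \<open>0 < w x\<close> by simp
  qed
  moreover have "z \<le> w0"
  proof (rule ccontr)
    assume "\<not> z \<le> w0"
    have "z < 1"
      using balance \<open>f 1 = 0\<close> \<open>w x < 1\<close> w_le_1 unfolding z_def by (metis less_le diff_gt_0_iff_gt)
    then have "f z < 1 - z"
      using hypF_below_diagonal[OF \<open>hypF f\<close> f_differentiable assms(2-4)] \<open>\<not> z \<le> w0\<close> by simp
    then show False using balance \<open>w x \<le> z\<close> by simp
  qed
  ultimately have "deriv f z < 0" using decreasing by blast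
  then show ?thesis
    using critical_point_delayed[OF \<open>deriv w x = 0\<close>] \<open>c * tau < 0\<close> \<open>z \<le> w0\<close> unfolding z_def by simp
qed

lemma C4_bdd_differentiable: "C4_bdd f \<Longrightarrow> f differentiable at x"
  unfolding C4_bdd_def by (metis funpow_0 zero_less_numeral)

lemma C4_bdd_deriv_bounded:
  assumes "C4_bdd f"
  shows "bounded (range (deriv f))"
proof -
  have "bounded (range ((deriv ^^ 1) f))"
    using assms unfolding C4_bdd_def by (simp del: funpow.simps One_nat_def)
  then show ?thesis by simp
qed

theorem lemma3p2:
  fixes f w :: "real \<Rightarrow> real" and tau c ws w0 :: real
  assumes "C4_bdd f" and "hypF f"
    and "tau \<ge> 0" and "c \<le> 0"
    and "0 < ws" and "ws < 1" and "f ws = 1" and "\<forall>v. 0 \<le> v \<and> v < ws \<longrightarrow> f v > 1"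
    and "0 < w0" and "w0 < 1" and "f w0 = 1 - w0"
    and "\<forall>v. ws \<le> v \<and> v \<le> w0 \<longrightarrow> deriv f v < 0"
    and "solves_P f tau c w"
    and "\<forall>x. deriv w x \<le> 0"
  shows "\<forall>x. deriv w x < 0"
proof (rule ccontr)
  interpret monotone_front f w tau c
    using assms C4_bdd_differentiable C4_bdd_deriv_bounded
    by unfold_locales (auto simp: mult_nonpos_nonneg)
  note recurs = critical_point_propagates[OF assms(2,9-11,8,12)]
  assume "\<not> (\<forall>x. deriv w x < 0)"
  then obtain x where "deriv w x = 0"
    using assms(14) by (meson linorder_not_less order_antisym)
  then have "c * tau < 0" using recurs by blast
  have critical: "deriv w (x + c * tau * real n) = 0" for n
  proof (induction n)
    case (Suc n)
    then show ?case using recurs[of "x + c * tau * real n"] by (simp add: algebra_simps)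
  qed (use \<open>deriv w x = 0\<close> in simp)
  have "w (x + c * tau + c * tau * real n) \<le> w0" for n
    using recurs[OF critical[of n]] by (simp add: algebra_simps)
  moreover have "(\<lambda>n. w (x + c * tau + c * tau * real n)) \<longlonglongrightarrow> 1"
    by (rule tendsto_at_bot_along_progression[OF w_at_bot \<open>c * tau < 0\<close>])
  ultimately have "1 \<le> w0"
    by (intro tendsto_upperbound[of _ 1 sequentially]) auto
  then show False using \<open>w0 < 1\<close> by simp
qed

end
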